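(* If $G$ is an infinite, countable, locally finite group, then the number of ends of $G$ is infinite.
   Context: A group is locally finite if every finite subset is contained in a finite subgroup. For a countable group $G$ equipped with a proper left-invariant metric, the number of ends of $G$ is the cardinality of $CF(G)\setminus G$, where $CF(X)$, for a proper metric space $X$, is the compactification induced by all continuous glacially oscillating functions $X\to[0,1]$. A glacial scale on $X$ is a sequence $\mathcal S=\{(K_i,n_i)\}_{i\ge1}$, $K_i$ bounded, $n_i\in\mathbb N$, such that for every bounded $K$ and $r>0$ there is $i$ with $K\subset K_i$, $n_i>r$; an $\mathcal S$-chain is a finite sequence $x_1,\dots,x_n$ with, for each $i\le n-1$, some $m$ with $x_i,x_{i+1}\notin K_m$ and $d(x_i,x_{i+1})\le n_m$; $f$ is glacially oscillating if for every $\epsilon>0$ there is a glacial scale $\mathcal S$ with $|f(x_1)-f(x_n)|<\epsilon$ for all $\mathcal S$-chains. *)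

theory Defs
  imports "HOL-Analysis.Analysis" "HOL-Algebra.Group"
begin

definition proper_metric :: "'a set \<Rightarrow> ('a \<Rightarrow> 'a \<Rightarrow> real) \<Rightarrow> bool" where
  "proper_metric M d \<longleftrightarrow> Metric_space M d \<and>
     (\<forall>x\<in>M. \<forall>r. compactin (Metric_space.mtopology M d) (Metric_space.mcball M d x r))"

definition glacial_scale :: "'a set \<Rightarrow> ('a \<Rightarrow> 'a \<Rightarrow> real) \<Rightarrow> (nat \<Rightarrow> 'a set \<times> nat) \<Rightarrow> bool" where
  "glacial_scale M d S \<longleftrightarrow>
     (\<forall>i. fst (S i) \<subseteq> M \<and> Metric_space.mbounded M d (fst (S i))) \<and>
     (\<forall>K r. K \<subseteq> M \<and> Metric_space.mbounded M d K \<and> r > 0 \<longrightarrow>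
        (\<exists>i. K \<subseteq> fst (S i) \<and> real (snd (S i)) > r))"

definition glacial_chain :: "'a set \<Rightarrow> ('a \<Rightarrow> 'a \<Rightarrow> real) \<Rightarrow> (nat \<Rightarrow> 'a set \<times> nat) \<Rightarrow> 'a list \<Rightarrow> bool" where
  "glacial_chain M d S xs \<longleftrightarrow> xs \<noteq> [] \<and> set xs \<subseteq> M \<and>
     (\<forall>i. Suc i < length xs \<longrightarrow>
        (\<exists>m. xs ! i \<notin> fst (S m) \<and> xs ! Suc i \<notin> fst (S m) \<and>
             d (xs ! i) (xs ! Suc i) \<le> real (snd (S m))))"

definition glacially_oscillating :: "'a set \<Rightarrow> ('a \<Rightarrow> 'a \<Rightarrow> real) \<Rightarrow> ('a \<Rightarrow> real) \<Rightarrow> bool" where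
  "glacially_oscillating M d f \<longleftrightarrow>
     (\<forall>\<epsilon>>0. \<exists>S. glacial_scale M d S \<and>
        (\<forall>xs. glacial_chain M d S xs \<longrightarrow> \<bar>f (hd xs) - f (last xs)\<bar> < \<epsilon>))"

definition CF_family :: "'a set \<Rightarrow> ('a \<Rightarrow> 'a \<Rightarrow> real) \<Rightarrow> ('a \<Rightarrow> real) set" where
  "CF_family M d = {f. f \<in> extensional M \<and> f ` M \<subseteq> {0..1} \<and>
      continuous_map (Metric_space.mtopology M d) euclideanreal f \<and>
      glacially_oscillating M d f}"

definition CF_eval :: "'a set \<Rightarrow> ('a \<Rightarrow> 'a \<Rightarrow> real) \<Rightarrow> 'a \<Rightarrow> (('a \<Rightarrow> real) \<Rightarrow> real)" where
  "CF_eval M d x = (\<lambda>f\<in>CF_family M d. f x)"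

definition CF_topology :: "'a set \<Rightarrow> ('a \<Rightarrow> 'a \<Rightarrow> real) \<Rightarrow> (('a \<Rightarrow> real) \<Rightarrow> real) topology" where
  "CF_topology M d = product_topology (\<lambda>_. subtopology euclideanreal {0..1}) (CF_family M d)"

definition CF :: "'a set \<Rightarrow> ('a \<Rightarrow> 'a \<Rightarrow> real) \<Rightarrow> (('a \<Rightarrow> real) \<Rightarrow> real) set" where
  "CF M d = (CF_topology M d) closure_of (CF_eval M d ` M)"

definition ends :: "'a set \<Rightarrow> ('a \<Rightarrow> 'a \<Rightarrow> real) \<Rightarrow> (('a \<Rightarrow> real) \<Rightarrow> real) set" where
  "ends M d = CF M d - CF_eval M d ` M"

definition locally_finite_group :: "('a, 'b) monoid_scheme \<Rightarrow> bool" where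
  "locally_finite_group G \<longleftrightarrow>
     (\<forall>S. finite S \<and> S \<subseteq> carrier G \<longrightarrow> (\<exists>H. subgroup H G \<and> finite H \<and> S \<subseteq> H))"

definition left_invariant_metric :: "('a, 'b) monoid_scheme \<Rightarrow> ('a \<Rightarrow> 'a \<Rightarrow> real) \<Rightarrow> bool" where
  "left_invariant_metric G d \<longleftrightarrow>
     (\<forall>g\<in>carrier G. \<forall>x\<in>carrier G. \<forall>y\<in>carrier G. d (g \<otimes>\<^bsub>G\<^esub> x) (g \<otimes>\<^bsub>G\<^esub> y) = d x y)"

end

theory Submission
  imports Defs
begin

text \<open>A countable proper metric space has an isolated point (Baire), so a left-invariant
  proper metric on a countable group is discrete and its balls are finite. Local finiteness then
  yields a strictly increasing chain of finite subgroups \<open>H k\<close> with \<open>H k\<close> containing the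
  \<open>k\<close>-ball about the identity. The level of \<open>x\<close>, the least \<open>k\<close> with \<open>x \<in> H k\<close>, is constant along
  chains of the glacial scale \<open>(H k, k)\<close>: two points outside \<open>H m\<close> at distance at most \<open>m\<close>
  lie in the same cosets of every \<open>H j\<close>. Hence every function of the level is continuous and
  glacially oscillating. By compactness of \<open>CF\<close>, each infinite set \<open>P\<close> of levels has an end on
  which all such functions constant on \<open>P\<close> take that constant, and infinitely many disjoint
  infinite sets \<open>P\<close> give infinitely many distinct ends.\<close>

lemma (in Metric_space) proper_imp_locally_compact_space:
  assumes "proper_metric M d"
  shows "locally_compact_space mtopology"
  unfolding locally_compact_space_def
proof (intro ballI exI conjI)
  fix x assume "x \<in> topspace mtopology"
  then show "openin mtopology (mball x 1)" "compactin mtopology (mcball x 1)"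
    "x \<in> mball x 1" "mball x 1 \<subseteq> mcball x 1"
    using assms mball_subset_mcball by (auto simp: proper_metric_def)
qed

lemma (in Metric_space) proper_countable_has_isolated_point:
  assumes "proper_metric M d" "countable M" "M \<noteq> {}"
  shows "\<exists>x\<in>M. openin mtopology {x}"
proof (rule ccontr)
  assume no_isolated: "\<not> ?thesis"
  have "mtopology interior_of \<Union>((\<lambda>x. {x}) ` M) = {}"
  proof (rule Baire_category_alt)
    show "completely_metrizable_space mtopology \<or>
        locally_compact_space mtopology \<and> regular_space mtopology"
      using proper_imp_locally_compact_space[OF assms(1)] regular_space_mtopology by blast
    show "countable ((\<lambda>x. {x}) ` M)" using assms(2) by simp
  next
    fix T assume "T \<in> (\<lambda>x. {x}) ` M"
    then obtain x where x: "x \<in> M" "T = {x}" by blast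
    have "closedin mtopology T"
      using x closedin_t1_singleton Hausdorff_imp_t1_space Hausdorff_space_mtopology by fastforce
    moreover have "mtopology interior_of T = {}"
      using x no_isolated interior_of_subset[of mtopology T] interior_of_eq[of mtopology T]
      by (auto simp: subset_singleton_iff)
    ultimately show "closedin mtopology T \<and> mtopology interior_of T = {}" ..
  qed
  then show False
    using assms(3) interior_of_topspace[of mtopology] by simp
qed

lemma (in Metric_space) discrete_proper_mbounded_imp_finite:
  assumes "proper_metric M d" "mtopology = discrete_topology M" "mbounded S"
  shows "finite S"
proof -
  obtain x B where S: "S \<subseteq> mcball x B" using assms(3) by (auto simp: mbounded_def)
  have "finite (mcball x B)"
  proof (cases "x \<in> M")
    case True
    then show ?thesis using assms(1,2) by (simp add: proper_metric_def compactin_discrete_topology)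
  next
    case False
    then have "mcball x B = {}" by auto
    then show ?thesis by simp
  qed
  then show ?thesis using S finite_subset by blast
qed

lemma (in Metric_space) mbounded_subset_mcball:
  assumes "mbounded S" "a \<in> M"
  shows "\<exists>r. S \<subseteq> mcball a r"
proof -
  obtain x B where S: "S \<subseteq> mcball x B" using assms(1) by (auto simp: mbounded_def)
  show ?thesis
  proof (cases "x \<in> M")
    case True
    then have "mcball x B \<subseteq> mcball a (d x a + B)" using assms(2) by (intro mcball_subset) auto
    then show ?thesis using S by blast
  next
    case False
    then have "S = {}" using S by auto
    then show ?thesis by blast
  qed
qed

lemma (in Metric_space) finite_imp_mbounded:
  "finite S \<Longrightarrow> S \<subseteq> M \<Longrightarrow> mbounded S"
  by (induction S rule: finite_induct) (auto simp: mbounded_insert)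

lemma glacial_chain_hd_last_eq:
  assumes chain: "glacial_chain M d S xs"
    and step: "\<And>x y m. x \<in> M \<Longrightarrow> y \<in> M \<Longrightarrow> x \<notin> fst (S m) \<Longrightarrow> y \<notin> fst (S m) \<Longrightarrow>
      d x y \<le> real (snd (S m)) \<Longrightarrow> f x = f y"
  shows "f (hd xs) = f (last xs)"
proof -
  have xs: "xs \<noteq> []" "set xs \<subseteq> M" using chain by (auto simp: glacial_chain_def)
  have invariant: "f (xs ! i) = f (xs ! 0)" if "i < length xs" for i
    using that
  proof (induction i)
    case (Suc i)
    then obtain m where m: "xs ! i \<notin> fst (S m)" "xs ! Suc i \<notin> fst (S m)"
      "d (xs ! i) (xs ! Suc i) \<le> real (snd (S m))"
      using chain by (auto simp: glacial_chain_def)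
    have "xs ! i \<in> M" "xs ! Suc i \<in> M"
      using Suc.prems xs(2) nth_mem[of i xs] nth_mem[of "Suc i" xs] by auto
    then have "f (xs ! Suc i) = f (xs ! i)" using step m by metis
    then show ?case using Suc by simp
  qed simp
  from invariant[of "length xs - 1"] show ?thesis
    using xs(1) by (simp add: hd_conv_nth last_conv_nth)
qed

lemma step_invariant_imp_glacially_oscillating:
  assumes "glacial_scale M d S"
    and "\<And>x y m. x \<in> M \<Longrightarrow> y \<in> M \<Longrightarrow> x \<notin> fst (S m) \<Longrightarrow> y \<notin> fst (S m) \<Longrightarrow>
      d x y \<le> real (snd (S m)) \<Longrightarrow> f x = f y"
  shows "glacially_oscillating M d f"
  unfolding glacially_oscillating_def
proof (intro allI impI)
  fix \<epsilon> :: real assume "\<epsilon> > 0"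
  moreover have "f (hd xs) = f (last xs)" if "glacial_chain M d S xs" for xs
    using glacial_chain_hd_last_eq[OF that assms(2)] .
  ultimately have "\<forall>xs. glacial_chain M d S xs \<longrightarrow> \<bar>f (hd xs) - f (last xs)\<bar> < \<epsilon>"
    by simp
  then show "\<exists>S. glacial_scale M d S \<and>
      (\<forall>xs. glacial_chain M d S xs \<longrightarrow> \<bar>f (hd xs) - f (last xs)\<bar> < \<epsilon>)"
    using assms(1) by blast
qed

definition chain_level :: "(nat \<Rightarrow> 'a set) \<Rightarrow> 'a \<Rightarrow> nat" where
  "chain_level H x = (LEAST k. x \<in> H k)"

lemma chain_level_eqI:
  "x \<in> H k \<Longrightarrow> (\<And>j. j < k \<Longrightarrow> x \<notin> H j) \<Longrightarrow> chain_level H x = k"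
  unfolding chain_level_def by (rule Least_equality) (use leI in blast)+

lemma chain_level_surj:
  assumes strict: "\<And>k. H k \<subset> H (Suc k)" and "H 0 \<noteq> {}"
  shows "\<exists>x\<in>H k. chain_level H x = k"
proof (cases k)
  case 0
  then show ?thesis using assms(2) chain_level_eqI[of _ H 0] by blast
next
  case (Suc j)
  obtain x where x: "x \<in> H (Suc j)" "x \<notin> H j" using strict[of j] by blast
  have mono: "H i \<subseteq> H j" if "i \<le> j" for i
    using lift_Suc_mono_le[of H, OF _ that] strict by blast
  have "chain_level H x = Suc j"
  proof (rule chain_level_eqI[of x H "Suc j", OF x(1)])
    show "x \<notin> H i" if "i < Suc j" for i using that x(2) mono[of i] by auto
  qed
  then show ?thesis using x Suc by blast
qed

lemma (in group) locally_finite_strict_finite_supergroup: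
  assumes "locally_finite_group G" "infinite (carrier G)" "finite A" "A \<subseteq> carrier G"
  shows "\<exists>K. subgroup K G \<and> finite K \<and> A \<subset> K"
proof -
  have "\<not> carrier G \<subseteq> A" using assms(2,3) finite_subset by blast
  then obtain a where a: "a \<in> carrier G" "a \<notin> A" by blast
  then have "finite (insert a A)" "insert a A \<subseteq> carrier G" using assms(3,4) by auto
  then obtain K where "subgroup K G" "finite K" "insert a A \<subseteq> K"
    using assms(1) unfolding locally_finite_group_def by blast
  then show ?thesis using a(2) by blast
qed

lemma (in group) locally_finite_subgroup_chain:
  assumes "locally_finite_group G" "infinite (carrier G)"
    and "\<And>k. finite (F k)" "\<And>k. F k \<subseteq> carrier G"
  obtains H where "\<And>k. subgroup (H k) G" "\<And>k. finite (H k)" "\<And>k. F k \<subseteq> H k"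
    "\<And>k. H k \<subset> H (Suc k)"
proof -
  define P where "P k K \<longleftrightarrow> subgroup K G \<and> finite K \<and> F k \<subseteq> K" for k K
  have base: "\<exists>K. P 0 K"
    using locally_finite_strict_finite_supergroup[OF assms(1-4)] by (auto simp: P_def)
  have step: "\<exists>K'. P (Suc k) K' \<and> K \<subset> K'" if "P k K" for k K
  proof -
    have "finite (K \<union> F (Suc k))" "K \<union> F (Suc k) \<subseteq> carrier G"
      using that assms(3,4) subgroup.subset[of K G] by (auto simp: P_def)
    then obtain K' where "subgroup K' G" "finite K'" "K \<union> F (Suc k) \<subset> K'"
      using locally_finite_strict_finite_supergroup[OF assms(1,2)] by meson
    moreover have "K \<subset> K'" using \<open>K \<union> F (Suc k) \<subset> K'\<close> by blast
    ultimately show ?thesis unfolding P_def by blast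
  qed
  obtain H where H: "\<forall>k. P k (H k) \<and> H k \<subset> H (Suc k)"
    using dependent_nat_choice[of P "\<lambda>_ K K'. K \<subset> K'", OF base step] by blast
  have "subgroup (H k) G" "finite (H k)" "F k \<subseteq> H k" "H k \<subset> H (Suc k)" for k
    using H[rule_format, of k] unfolding P_def by blast+
  then show ?thesis by (rule that)
qed

locale left_invariant_metric_group = group G + Metric_space "carrier G" d
  for G :: "('a, 'b) monoid_scheme" (structure) and d :: "'a \<Rightarrow> 'a \<Rightarrow> real" +
  assumes left_invariant: "left_invariant_metric G d"
begin

lemma left_translation_isometry:
  "g \<in> carrier G \<Longrightarrow> x \<in> carrier G \<Longrightarrow> y \<in> carrier G \<Longrightarrow> d (g \<otimes> x) (g \<otimes> y) = d x y"
  using left_invariant by (simp add: left_invariant_metric_def)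

lemma dist_one_inv_mult:
  assumes "x \<in> carrier G" "y \<in> carrier G"
  shows "d \<one> (inv x \<otimes> y) = d x y"
  using left_translation_isometry[of "inv x" x y] assms by simp

text \<open>Left translations are isometries, so they move an isolated point onto any other point.\<close>
lemma isolated_point_imp_discrete_mtopology:
  assumes "x \<in> carrier G" "openin mtopology {x}"
  shows "mtopology = discrete_topology (carrier G)"
proof -
  obtain r where r: "r > 0" "mball x r \<subseteq> {x}" using assms openin_mtopology by auto
  have "mball y r \<subseteq> {y}" if y: "y \<in> carrier G" for y
  proof
    fix z assume z: "z \<in> mball y r"
    let ?g = "x \<otimes> inv y"
    have g: "?g \<in> carrier G" "?g \<otimes> y = x" using assms(1) y by (auto simp: m_assoc)
    have "?g \<otimes> z \<in> mball x r" using z g assms(1) left_translation_isometry[of ?g y z] by auto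
    then have "?g \<otimes> z = ?g \<otimes> y" using r(2) g by auto
    then show "z \<in> {y}" using g(1) y z by simp
  qed
  then have "\<forall>y\<in>carrier G. openin mtopology {y}" using r(1) openin_mtopology by auto
  then show ?thesis using discrete_topology_unique[of "carrier G" mtopology] by simp
qed

lemma proper_countable_imp_discrete_mtopology:
  assumes "proper_metric (carrier G) d" "countable (carrier G)"
  shows "mtopology = discrete_topology (carrier G)"
proof -
  have "carrier G \<noteq> {}" using one_closed by blast
  then obtain x where "x \<in> carrier G" "openin mtopology {x}"
    using proper_countable_has_isolated_point[OF assms] by blast
  then show ?thesis by (rule isolated_point_imp_discrete_mtopology)
qed

lemma subgroup_mem_iff_close:
  assumes K: "subgroup K G" "mcball \<one> r \<subseteq> K"
    and xy: "x \<in> carrier G" "y \<in> carrier G" "d x y \<le> r"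
  shows "x \<in> K \<longleftrightarrow> y \<in> K"
proof -
  let ?h = "inv x \<otimes> y"
  have "?h \<in> K" using K(2) xy dist_one_inv_mult by auto
  moreover have "y = x \<otimes> ?h" "x = y \<otimes> inv ?h"
    using xy by (simp_all add: m_assoc[symmetric] inv_mult_group)
  ultimately show ?thesis
    using xy(1,2) subgroup.m_closed[OF K(1)] subgroup.m_inv_closed[OF K(1)] by metis
qed

lemma glacial_scale_subgroup_chain:
  assumes "\<And>k. finite (H k)" "\<And>k. H k \<subseteq> carrier G" "\<And>k. mcball \<one> (real k) \<subseteq> H k"
  shows "glacial_scale (carrier G) d (\<lambda>k. (H k, k))"
  unfolding glacial_scale_def
proof (intro conjI allI impI)
  show "fst (H k, k) \<subseteq> carrier G" "mbounded (fst (H k, k))" for k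
    using assms(1,2) finite_imp_mbounded by auto
next
  fix K and r :: real
  assume K: "K \<subseteq> carrier G \<and> mbounded K \<and> r > 0"
  then obtain s where s: "K \<subseteq> mcball \<one> s" using mbounded_subset_mcball[of K \<one>] by auto
  define i where "i = nat \<lceil>max r s\<rceil> + 1"
  have "s \<le> real i" "r < real i" unfolding i_def by linarith+
  then have "K \<subseteq> mcball \<one> (real i)" using s mcball_subset_concentric[of s "real i" \<one>] by blast
  then show "\<exists>i. K \<subseteq> fst (H i, i) \<and> real (snd (H i, i)) > r"
    using assms(3)[of i] \<open>r < real i\<close> by auto
qed

lemma chain_level_glacially_oscillating:
  assumes "\<And>k. subgroup (H k) G" "\<And>k. finite (H k)" "\<And>k. mcball \<one> (real k) \<subseteq> H k"
    and "incseq H"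
  shows "glacially_oscillating (carrier G) d (\<lambda>x\<in>carrier G. \<phi> (chain_level H x))"
proof (rule step_invariant_imp_glacially_oscillating)
  show "glacial_scale (carrier G) d (\<lambda>k. (H k, k))"
    using glacial_scale_subgroup_chain[OF assms(2) subgroup.subset[OF assms(1)] assms(3)] .
next
  fix x y m
  assume xy: "x \<in> carrier G" "y \<in> carrier G" and out: "x \<notin> fst (H m, m)" "y \<notin> fst (H m, m)"
    and close: "d x y \<le> real (snd (H m, m))"
  have "x \<in> H j \<longleftrightarrow> y \<in> H j" for j
  proof (cases "j \<le> m")
    case True
    then show ?thesis using out monoD[OF assms(4) True] by auto
  next
    case False
    then have "mcball \<one> (real m) \<subseteq> H j" using assms(3) monoD[OF assms(4), of m j] by auto
    moreover have "d x y \<le> real m" using close by simp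
    ultimately show ?thesis using subgroup_mem_iff_close[OF assms(1) _ xy] by blast
  qed
  then show "(\<lambda>x\<in>carrier G. \<phi> (chain_level H x)) x = (\<lambda>x\<in>carrier G. \<phi> (chain_level H x)) y"
    using xy by (simp add: chain_level_def)
qed

end

lemma compact_space_CF_topology: "compact_space (CF_topology M d)"
  unfolding CF_topology_def compact_space_product_topology
  by (simp add: compact_space_subtopology)

lemma CF_eval_in_topspace: "x \<in> M \<Longrightarrow> CF_eval M d x \<in> topspace (CF_topology M d)"
  unfolding CF_topology_def CF_eval_def by (auto simp: CF_family_def)

lemma CF_closure_coordinate_eq:
  assumes f: "f \<in> CF_family M d" and A: "A \<subseteq> M" "\<And>x. x \<in> A \<Longrightarrow> f x = c"
    and p: "p \<in> CF_topology M d closure_of (CF_eval M d ` A)"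
  shows "p f = c"
proof -
  let ?X = "CF_topology M d"
  have "continuous_map ?X euclideanreal (\<lambda>q. q f)"
    unfolding CF_topology_def
    by (rule continuous_map_into_fulltopology[OF continuous_map_product_projection[OF f]])
  then have "closedin ?X {q \<in> topspace ?X. q f \<in> {c}}"
    by (rule closedin_continuous_map_preimage) simp
  moreover have "CF_eval M d ` A \<subseteq> {q \<in> topspace ?X. q f \<in> {c}}"
  proof (intro image_subsetI CollectI conjI)
    fix x assume "x \<in> A"
    then show "CF_eval M d x \<in> topspace ?X" "CF_eval M d x f \<in> {c}"
      using A f CF_eval_in_topspace[of x M d] by (auto simp: CF_eval_def)
  qed
  ultimately have "?X closure_of (CF_eval M d ` A) \<subseteq> {q \<in> topspace ?X. q f \<in> {c}}"
    by (simp add: closure_of_minimal)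
  then show ?thesis using p by blast
qed

lemma (in Metric_space) discrete_restrict_in_CF_family:
  assumes "mtopology = discrete_topology M" "f ` M \<subseteq> {0..1}"
    and "glacially_oscillating M d (restrict f M)"
  shows "restrict f M \<in> CF_family M d"
  using assms unfolding CF_family_def by (simp add: image_subset_iff)

context
  fixes M :: "'a set" and d :: "'a \<Rightarrow> 'a \<Rightarrow> real" and lvl :: "'a \<Rightarrow> nat"
  assumes lvl_surj: "\<And>k. \<exists>x\<in>M. lvl x = k"
    and level_functions_CF: "\<And>\<phi>. range \<phi> \<subseteq> {0..1} \<Longrightarrow> (\<lambda>x\<in>M. \<phi> (lvl x)) \<in> CF_family M d"
begin

text \<open>The end is a cluster point of the points whose level lies in \<open>P\<close>; it is not a point
  of \<open>M\<close> because the levels of those points tend to infinity.\<close>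
lemma ends_cluster_at_levels:
  assumes "infinite P"
  obtains p where "p \<in> ends M d"
    and "\<forall>\<phi> c. range \<phi> \<subseteq> {0..1} \<longrightarrow> (\<forall>k\<in>P. \<phi> k = c) \<longrightarrow> p (\<lambda>x\<in>M. \<phi> (lvl x)) = c"
proof -
  let ?X = "CF_topology M d" and ?e = "CF_eval M d"
  define A where "A n = {x \<in> M. lvl x \<in> P \<and> n \<le> lvl x}" for n
  define C where "C n = ?X closure_of (?e ` A n)" for n
  have A_sub: "A n \<subseteq> M" for n by (auto simp: A_def)
  have "(\<Inter>n. C n) \<noteq> {}"
  proof (rule compact_space_imp_nest[OF compact_space_CF_topology])
    show "closedin ?X (C n)" for n by (simp add: C_def)
    show "decseq C" unfolding decseq_def C_def A_def
      by (intro allI impI closure_of_mono image_mono) auto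
    show "C n \<noteq> {}" for n
    proof -
      obtain k where k: "k \<in> P" "n \<le> k" using assms infinite_nat_iff_unbounded_le by blast
      obtain x where x: "x \<in> M" "lvl x = k" using lvl_surj by blast
      have "?e ` A n \<subseteq> topspace ?X" using A_sub CF_eval_in_topspace by (metis image_subset_iff subsetD)
      moreover have "?e x \<in> ?e ` A n" using x k by (auto simp: A_def)
      ultimately show ?thesis using closure_of_subset[of "?e ` A n" ?X] unfolding C_def by blast
    qed
  qed
  then obtain p where p: "p \<in> C n" for n by blast
  have coordinate: "p (\<lambda>x\<in>M. \<phi> (lvl x)) = c"
    if "range \<phi> \<subseteq> {0..1}" "\<And>k. k \<in> P \<Longrightarrow> n \<le> k \<Longrightarrow> \<phi> k = c" for \<phi> c n
    using CF_closure_coordinate_eq[OF level_functions_CF[OF that(1)] A_sub, of n c p] p[of n] that(2)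
    by (auto simp: A_def C_def)
  have "p \<notin> ?e ` M"
  proof
    assume "p \<in> ?e ` M"
    then obtain y where y: "y \<in> M" "p = ?e y" by blast
    define \<theta> where "\<theta> k = (if lvl y < k then 1 else 0 :: real)" for k
    have \<theta>: "range \<theta> \<subseteq> {0..1}" by (auto simp: \<theta>_def)
    have "p (\<lambda>x\<in>M. \<theta> (lvl x)) = 1" by (rule coordinate[OF \<theta>, of "Suc (lvl y)"]) (simp add: \<theta>_def)
    moreover have "p (\<lambda>x\<in>M. \<theta> (lvl x)) = 0"
      using y level_functions_CF[OF \<theta>] by (simp add: CF_eval_def \<theta>_def)
    ultimately show False by simp
  qed
  moreover have "C 0 \<subseteq> CF M d"
    unfolding C_def CF_def using A_sub by (intro closure_of_mono image_mono)
  then have "p \<in> CF M d" using p by blast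
  ultimately have "p \<in> ends M d" by (simp add: ends_def)
  moreover have "\<forall>\<phi> c. range \<phi> \<subseteq> {0..1} \<longrightarrow> (\<forall>k\<in>P. \<phi> k = c) \<longrightarrow> p (\<lambda>x\<in>M. \<phi> (lvl x)) = c"
    by (intro allI impI coordinate[of _ 0]) auto
  ultimately show ?thesis using that by blast
qed

lemma level_functions_imp_infinite_ends: "infinite (ends M d)"
proof -
  define P where "P r = {k. fst (prod_decode k) = r}" for r
  have P_infinite: "infinite (P r)" for r
  proof (rule infinite_super)
    show "range (\<lambda>n. prod_encode (r, n)) \<subseteq> P r" by (auto simp: P_def)
    show "infinite (range (\<lambda>n. prod_encode (r, n)))"
      by (rule range_inj_infinite) (simp add: inj_def inj_prod_encode[THEN inj_onD])
  qed
  have "\<exists>q. q \<in> ends M d \<and> (\<forall>\<phi> c. range \<phi> \<subseteq> {0..1} \<longrightarrow> (\<forall>k\<in>P r. \<phi> k = c) \<longrightarrow>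
      q (\<lambda>x\<in>M. \<phi> (lvl x)) = c)" for r
    by (rule ends_cluster_at_levels[OF P_infinite]) blast
  from choice[OF allI[OF this]] obtain p where p: "\<forall>r. p r \<in> ends M d \<and>
      (\<forall>\<phi> c. range \<phi> \<subseteq> {0..1} \<longrightarrow> (\<forall>k\<in>P r. \<phi> k = c) \<longrightarrow> p r (\<lambda>x\<in>M. \<phi> (lvl x)) = c)" ..
  have p_end: "p r \<in> ends M d" for r
    using p by simp
  have p_val: "p r (\<lambda>x\<in>M. \<phi> (lvl x)) = c"
    if "range \<phi> \<subseteq> {0..1}" "\<And>k. k \<in> P r \<Longrightarrow> \<phi> k = c" for r \<phi> c
    using conjunct2[OF spec[OF p, of r], rule_format, OF that] .
  have "inj p"
  proof (rule injI, rule ccontr)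
    fix r s assume eq: "p r = p s" and "r \<noteq> s"
    define \<phi> where "\<phi> k = (if k \<in> P r then 1 else 0 :: real)" for k
    have \<phi>: "range \<phi> \<subseteq> {0..1}" by (auto simp: \<phi>_def)
    have "p r (\<lambda>x\<in>M. \<phi> (lvl x)) = 1" by (rule p_val[OF \<phi>]) (simp add: \<phi>_def)
    moreover have "p s (\<lambda>x\<in>M. \<phi> (lvl x)) = 0"
      by (rule p_val[OF \<phi>]) (use \<open>r \<noteq> s\<close> in \<open>auto simp: \<phi>_def P_def\<close>)
    ultimately show False using eq by simp
  qed
  then have "infinite (range p)" by (rule range_inj_infinite)
  moreover have "range p \<subseteq> ends M d" using p_end by blast
  ultimately show ?thesis using infinite_super by blast
qed

end

theorem proposition5p6:
  fixes G :: "('a, 'b) monoid_scheme" and d :: "'a \<Rightarrow> 'a \<Rightarrow> real"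
  assumes "group G"
    and "infinite (carrier G)"
    and "countable (carrier G)"
    and "locally_finite_group G"
    and "proper_metric (carrier G) d"
    and "left_invariant_metric G d"
  shows "infinite (ends (carrier G) d)"
proof -
  interpret left_invariant_metric_group G d
    using assms(1,5,6) unfolding left_invariant_metric_group_def left_invariant_metric_group_axioms_def
    by (simp add: proper_metric_def)
  have discrete: "mtopology = discrete_topology (carrier G)"
    using proper_countable_imp_discrete_mtopology[OF assms(5,3)] .
  have finite_balls: "finite (mcball \<one>\<^bsub>G\<^esub> (real k))" for k
    using discrete_proper_mbounded_imp_finite[OF assms(5) discrete mbounded_mcball] .
  obtain H where H: "\<And>k. subgroup (H k) G" "\<And>k. finite (H k)"
      "\<And>k. mcball \<one>\<^bsub>G\<^esub> (real k) \<subseteq> H k" "\<And>k. H k \<subset> H (Suc k)"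
    by (rule locally_finite_subgroup_chain[where F = "\<lambda>k. mcball \<one>\<^bsub>G\<^esub> (real k)",
          OF assms(4,2) finite_balls mcball_subset_mspace]) blast
  have "incseq H" using H(4) by (simp add: incseq_SucI psubset_imp_subset)
  show ?thesis
  proof (rule level_functions_imp_infinite_ends)
    show "\<exists>x\<in>carrier G. chain_level H x = k" for k
      using chain_level_surj[of H, OF H(4)] subgroup.one_closed[OF H(1)] subgroup.subset[OF H(1)] by blast
    show "(\<lambda>x\<in>carrier G. \<phi> (chain_level H x)) \<in> CF_family (carrier G) d"
      if "range \<phi> \<subseteq> {0..1}" for \<phi>
      using chain_level_glacially_oscillating[OF H(1-3) \<open>incseq H\<close>] that
      by (intro discrete_restrict_in_CF_family[OF discrete]) auto
  qed
qed

end
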